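(* Let $P$ be the set of primes and $S_P$ the group of permutations of $P$. For $\sigma\in S_P$ let $\hat\sigma$ be the unique automorphism of the multiplicative monoid $(\mathbb Q,\cdot)$ extending $\sigma$ (with $\hat\sigma(\pm1)=\pm1$, $\hat\sigma(0)=0$), and let $\mathbb Q_\sigma=(\mathbb Q,\cdot,+_\sigma)$ where $a+_\sigma b=\hat\sigma^{-1}(\hat\sigma(a)+\hat\sigma(b))$. Let $V_1=\bigoplus_{\sigma\in S_P}\mathbb Q_\sigma$ and $V_2=\bigoplus_{\sigma\in S_P\setminus\{\mathrm{id}\}}\mathbb Q_\sigma$, each a near vector space over $F=\mathbb Q$ (with $q\in\mathbb Q$ acting on the summand $\mathbb Q_\sigma$ by multiplication by $q$, and addition on each summand being $+_\sigma$). Then $BT(V_1)\neq BT(V_2)$ but $\bar F\cap\mathrm{Aut}(V_1)=\bar F\cap\mathrm{Aut}(V_2)$.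
   Context: A near vector space over $F$: $(V,+)$ a group, $F$ a set of endomorphisms containing $0,1,-1$, with $F\setminus\{0\}$ a subgroup of $\mathrm{Aut}(V,+)$, acting fixed point freely ($\alpha x=\beta x\Rightarrow\alpha=\beta$ or $x=0$), such that the quasi-kernel $Q(V)=\{u: \forall\alpha,\beta\in F\,\exists\gamma\in F\ \alpha u+\beta u=\gamma u\}$ generates $V$. For commutative $F$, $V$ decomposes as a direct sum of blocks (maximal regular near vector subspaces, each nonzero element of $Q(V)$ lying in exactly one), block $B_i$ being a vector space over a field $(F,+_{u_i},\circ)$ where $\alpha+_{u}\beta$ is the unique $\gamma$ with $\alpha u+\beta u=\gamma u$ for nonzero $u\in Q(V)\cap B_i$. The block type $BT(V)$ is the set of operations $\{+_{u_i}\}$ (equality as sets of operations). $\bar F$ is the set of formal finite sums $\alpha_1+_\cdot\cdots+_\cdot\alpha_n$ of elements of $F$, acting on $V$ by $v\mapsto\alpha_1(v)+\cdots+\alpha_n(v)$; $\bar F\cap\mathrm{Aut}(V)$ is the set of formal sums acting as automorphisms of $(V,+)$. *)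

theory Defs
  imports Complex_Main "HOL-Computational_Algebra.Primes"
begin

text \<open>A near vector space is given by a carrier V, an addition add, a zero
  and the scalar action sm (alpha acting on v). Here F is all of rat.\<close>

definition quasi_kernel :: "'v set \<Rightarrow> ('v \<Rightarrow> 'v \<Rightarrow> 'v) \<Rightarrow> (rat \<Rightarrow> 'v \<Rightarrow> 'v) \<Rightarrow> 'v set" where
  "quasi_kernel V add sm = {u \<in> V. \<forall>\<alpha> \<beta>. \<exists>\<gamma>. add (sm \<alpha> u) (sm \<beta> u) = sm \<gamma> u}"

definition u_add :: "('v \<Rightarrow> 'v \<Rightarrow> 'v) \<Rightarrow> (rat \<Rightarrow> 'v \<Rightarrow> 'v) \<Rightarrow> 'v \<Rightarrow> rat \<Rightarrow> rat \<Rightarrow> rat" where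
  "u_add add sm u = (\<lambda>\<alpha> \<beta>. THE \<gamma>. add (sm \<alpha> u) (sm \<beta> u) = sm \<gamma> u)"

text \<open>Block type: the set of operations +_u, u a nonzero element of Q(V)
  (each such u lies in exactly one block, and +_u is the block's addition).\<close>
definition block_type :: "'v set \<Rightarrow> ('v \<Rightarrow> 'v \<Rightarrow> 'v) \<Rightarrow> 'v \<Rightarrow> (rat \<Rightarrow> 'v \<Rightarrow> 'v)
    \<Rightarrow> (rat \<Rightarrow> rat \<Rightarrow> rat) set" where
  "block_type V add zero sm = {u_add add sm u | u. u \<in> quasi_kernel V add sm \<and> u \<noteq> zero}"

fun fsum_action :: "('v \<Rightarrow> 'v \<Rightarrow> 'v) \<Rightarrow> 'v \<Rightarrow> (rat \<Rightarrow> 'v \<Rightarrow> 'v) \<Rightarrow> rat list \<Rightarrow> 'v \<Rightarrow> 'v" where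
  "fsum_action add zero sm [] v = zero"
| "fsum_action add zero sm [\<alpha>] v = sm \<alpha> v"
| "fsum_action add zero sm (\<alpha> # \<beta> # \<alpha>s) v = add (sm \<alpha> v) (fsum_action add zero sm (\<beta> # \<alpha>s) v)"

definition is_group_aut :: "'v set \<Rightarrow> ('v \<Rightarrow> 'v \<Rightarrow> 'v) \<Rightarrow> ('v \<Rightarrow> 'v) \<Rightarrow> bool" where
  "is_group_aut V add f \<longleftrightarrow> bij_betw f V V \<and> (\<forall>x\<in>V. \<forall>y\<in>V. f (add x y) = add (f x) (f y))"

text \<open>F-bar intersected with Aut(V): formal (nonempty) sums acting as automorphisms of (V,+).\<close>
definition Fbar_Aut :: "'v set \<Rightarrow> ('v \<Rightarrow> 'v \<Rightarrow> 'v) \<Rightarrow> 'v \<Rightarrow> (rat \<Rightarrow> 'v \<Rightarrow> 'v) \<Rightarrow> rat list set" where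
  "Fbar_Aut V add zero sm = {\<alpha>s. \<alpha>s \<noteq> [] \<and> is_group_aut V add (fsum_action add zero sm \<alpha>s)}"

definition primes_set :: "nat set" where
  "primes_set = {p. prime p}"

definition S_P :: "(nat \<Rightarrow> nat) set" where
  "S_P = {\<sigma>. bij_betw \<sigma> primes_set primes_set \<and> (\<forall>n. \<not> prime n \<longrightarrow> \<sigma> n = n)}"

definition perm_inv :: "(nat \<Rightarrow> nat) \<Rightarrow> nat \<Rightarrow> nat" where
  "perm_inv \<sigma> = (\<lambda>n. if prime n then inv_into primes_set \<sigma> n else n)"

definition hat_int :: "(nat \<Rightarrow> nat) \<Rightarrow> int \<Rightarrow> int" where
  "hat_int \<sigma> a = sgn a * (\<Prod>p\<in>prime_factors (nat \<bar>a\<bar>). int (\<sigma> p) ^ multiplicity p (nat \<bar>a\<bar>))"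

definition hat :: "(nat \<Rightarrow> nat) \<Rightarrow> rat \<Rightarrow> rat" where
  "hat \<sigma> q = (case quotient_of q of (a, b) \<Rightarrow> of_int (hat_int \<sigma> a) / of_int (hat_int \<sigma> b))"

definition padd :: "(nat \<Rightarrow> nat) \<Rightarrow> rat \<Rightarrow> rat \<Rightarrow> rat" where
  "padd \<sigma> a b = hat (perm_inv \<sigma>) (hat \<sigma> a + hat \<sigma> b)"

definition dsum_carrier :: "(nat \<Rightarrow> nat) set \<Rightarrow> ((nat \<Rightarrow> nat) \<Rightarrow> rat) set" where
  "dsum_carrier I = {f. finite {\<sigma>. f \<sigma> \<noteq> 0} \<and> (\<forall>\<sigma>. \<sigma> \<notin> I \<longrightarrow> f \<sigma> = 0)}"

definition dsum_add :: "(nat \<Rightarrow> nat) set \<Rightarrow> ((nat \<Rightarrow> nat) \<Rightarrow> rat) \<Rightarrow> ((nat \<Rightarrow> nat) \<Rightarrow> rat) \<Rightarrow> (nat \<Rightarrow> nat) \<Rightarrow> rat" where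
  "dsum_add I f g = (\<lambda>\<sigma>. if \<sigma> \<in> I then padd \<sigma> (f \<sigma>) (g \<sigma>) else 0)"

definition dsum_smult :: "rat \<Rightarrow> ((nat \<Rightarrow> nat) \<Rightarrow> rat) \<Rightarrow> (nat \<Rightarrow> nat) \<Rightarrow> rat" where
  "dsum_smult q f = (\<lambda>\<sigma>. q * f \<sigma>)"

definition dsum_zero :: "(nat \<Rightarrow> nat) \<Rightarrow> rat" where
  "dsum_zero = (\<lambda>\<sigma>. 0)"

abbreviation I1 :: "(nat \<Rightarrow> nat) set" where "I1 \<equiv> S_P"
abbreviation I2 :: "(nat \<Rightarrow> nat) set" where "I2 \<equiv> S_P - {id}"

end

theory Submission
  imports Defs
begin

text \<open>If \<open>\<sigma> \<noteq> id\<close> and \<open>p\<close> is the least prime moved by \<open>\<sigma>\<close>, then \<open>\<sigma>\<close> fixes every prime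
  factor of \<open>p - 1\<close>, so \<open>(p - 1) +\<^sub>\<sigma> 1 = \<sigma>\<^sup>-\<^sup>1(p) \<noteq> p\<close>. Hence \<open>+\<^sub>\<sigma> \<noteq> +\<close>, and ordinary addition
  belongs to the block type of the direct sum exactly when \<open>\<bbbQ>\<^sub>i\<^sub>d\<close> is a summand.

  A formal sum acts componentwise, so it is an automorphism of the direct sum iff it is
  an automorphism of every summand \<open>(\<bbbQ>, +\<^sub>\<sigma>)\<close>. On \<open>\<bbbQ>\<^sub>i\<^sub>d\<close> this means \<open>\<Sum>\<alpha>\<^sub>i \<noteq> 0\<close>. If
  \<open>\<Sum>\<alpha>\<^sub>i = 0\<close>, take a transposition \<open>\<sigma>\<close> of two primes larger than all numerators and
  denominators met in evaluating the formal sum at \<open>1\<close>: there \<open>+\<^sub>\<sigma>\<close> is ordinary addition,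
  so the formal sum sends \<open>1\<close> to \<open>0\<close> in \<open>\<bbbQ>\<^sub>\<sigma>\<close> and is not injective, although \<open>\<sigma> \<noteq> id\<close>.
  So removing \<open>\<bbbQ>\<^sub>i\<^sub>d\<close> does not change which formal sums are automorphisms.\<close>

section \<open>The additions \<open>+\<^sub>\<sigma>\<close>\<close>

lemma prime_factor_le: "q \<in> prime_factors (n::nat) \<Longrightarrow> q \<le> n"
  by (cases "n = 0") (auto intro: dvd_imp_le)

lemma hat_int_eq_self:
  assumes "\<And>q. q \<in> prime_factors (nat \<bar>a\<bar>) \<Longrightarrow> \<sigma> q = q"
  shows "hat_int \<sigma> a = a"
proof (cases "a = 0")
  case True
  then show ?thesis by (simp add: hat_int_def)
next
  case False
  have "(\<Prod>p\<in>prime_factors (nat \<bar>a\<bar>). int (\<sigma> p) ^ multiplicity p (nat \<bar>a\<bar>))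
      = (\<Prod>p\<in>prime_factors (nat \<bar>a\<bar>). int p ^ multiplicity p (nat \<bar>a\<bar>))"
    using assms by (intro prod.cong) auto
  also have "\<dots> = int (\<Prod>p\<in>prime_factors (nat \<bar>a\<bar>). p ^ multiplicity p (nat \<bar>a\<bar>))"
    by simp
  also have "\<dots> = \<bar>a\<bar>"
    using False by (subst prod_prime_factors) auto
  finally show ?thesis
    unfolding hat_int_def by (simp add: sgn_mult_abs)
qed

lemma hat_int_prime: "prime p \<Longrightarrow> hat_int \<sigma> (int p) = int (\<sigma> p)"
  by (simp add: hat_int_def prime_prime_factors multiplicity_self prime_gt_0_nat)

lemma hat_of_int: "hat \<sigma> (of_int a) = of_int (hat_int \<sigma> a)"
  by (simp add: hat_def hat_int_def)

lemma hat_zero: "hat \<sigma> 0 = 0"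
  using hat_of_int[of \<sigma> 0] by (simp add: hat_int_def)

lemma hat_one: "hat \<sigma> 1 = 1"
  using hat_of_int[of \<sigma> 1] by (simp add: hat_int_def)

lemma hat_id: "hat id x = x"
proof -
  obtain a b where ab: "quotient_of x = (a, b)" by fastforce
  then show ?thesis
    by (simp add: hat_def hat_int_eq_self flip: quotient_of_div[OF ab])
qed

definition rat_height :: "rat \<Rightarrow> nat" where
  "rat_height x = nat \<bar>fst (quotient_of x)\<bar> + nat \<bar>snd (quotient_of x)\<bar>"

lemma hat_eq_self_if_fixes_below:
  assumes "\<And>q. q \<le> rat_height x \<Longrightarrow> \<sigma> q = q"
  shows "hat \<sigma> x = x"
proof -
  obtain a b where ab: "quotient_of x = (a, b)" by fastforce
  have "\<sigma> q = q" if "q \<in> prime_factors (nat \<bar>a\<bar>) \<union> prime_factors (nat \<bar>b\<bar>)" for q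
  proof (rule assms)
    show "q \<le> rat_height x"
      using that prime_factor_le unfolding rat_height_def ab
      by (metis UnE fst_conv snd_conv le_add1 le_add2 order_trans)
  qed
  then have "hat_int \<sigma> a = a" "hat_int \<sigma> b = b"
    by (auto intro: hat_int_eq_self)
  then show ?thesis
    by (simp add: hat_def ab flip: quotient_of_div[OF ab])
qed

lemma perm_inv_id: "perm_inv id = id"
  unfolding perm_inv_def primes_set_def by (auto simp: inv_into_def intro!: some_equality)

lemma padd_zero: "padd \<sigma> 0 0 = 0"
  by (simp add: padd_def hat_zero)

lemma padd_id: "padd id a b = a + b"
  by (simp add: padd_def perm_inv_id hat_id)

lemma id_in_S_P: "id \<in> S_P"
  unfolding S_P_def by auto

lemma perm_inv_fixes_iff:
  assumes "\<sigma> \<in> S_P"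
  shows "perm_inv \<sigma> q = q \<longleftrightarrow> \<sigma> q = q"
proof (cases "prime q")
  case True
  then have q: "q \<in> primes_set" by (simp add: primes_set_def)
  have bij: "bij_betw \<sigma> primes_set primes_set"
    using assms unfolding S_P_def by blast
  have "inv_into primes_set \<sigma> q = q \<longleftrightarrow> \<sigma> q = q"
  proof
    assume "inv_into primes_set \<sigma> q = q"
    with bij_betw_inv_into_right[OF bij q] show "\<sigma> q = q" by simp
  next
    assume "\<sigma> q = q"
    with bij_betw_inv_into_left[OF bij q] show "inv_into primes_set \<sigma> q = q" by simp
  qed
  then show ?thesis using True by (simp add: perm_inv_def)
next
  case False
  moreover have "\<sigma> q = q"
    using assms False unfolding S_P_def by blast
  ultimately show ?thesis by (simp add: perm_inv_def)
qed

lemma padd_neq_plus: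
  assumes "\<sigma> \<in> S_P" "\<sigma> \<noteq> id"
  shows "padd \<sigma> \<noteq> (+)"
proof
  assume padd: "padd \<sigma> = (+)"
  obtain n where "\<sigma> n \<noteq> n" using assms(2) by (meson eq_id_iff)
  then have "prime n" using assms(1) unfolding S_P_def by blast
  define p where "p = (LEAST q. prime q \<and> \<sigma> q \<noteq> q)"
  have p: "prime p" "\<sigma> p \<noteq> p"
    unfolding p_def using LeastI[of "\<lambda>q. prime q \<and> \<sigma> q \<noteq> q"] \<open>\<sigma> n \<noteq> n\<close> \<open>prime n\<close> by auto
  have "\<sigma> q = q" if q: "q \<in> prime_factors (p - 1)" for q
  proof -
    have "q < p"
      using prime_factor_le[OF q] prime_gt_0_nat[OF p(1)] by linarith
    moreover have "prime q"
      using q by (simp add: in_prime_factors_iff)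
    ultimately show ?thesis
      using not_less_Least[of q "\<lambda>q. prime q \<and> \<sigma> q \<noteq> q"] unfolding p_def by blast
  qed
  then have "hat_int \<sigma> (int (p - 1)) = int (p - 1)"
    by (intro hat_int_eq_self) simp
  then have "hat \<sigma> (of_nat (p - 1)) = of_nat (p - 1)"
    using hat_of_int[of \<sigma> "int (p - 1)"] by simp
  then have "padd \<sigma> (of_nat (p - 1)) 1 = hat (perm_inv \<sigma>) (of_nat p)"
    using prime_gt_0_nat[OF p(1)] by (simp add: padd_def hat_one of_nat_diff)
  also have "\<dots> = of_nat (perm_inv \<sigma> p)"
    using hat_of_int[of "perm_inv \<sigma>" "int p"] hat_int_prime[OF p(1)] by simp
  finally have "of_nat (perm_inv \<sigma> p) = (of_nat p :: rat)"
    using prime_gt_0_nat[OF p(1)] by (simp add: padd of_nat_diff)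
  then show False
    using p(2) perm_inv_fixes_iff[OF assms(1)] by simp
qed

lemma padd_eq_plus_if_fixes_below:
  assumes "\<sigma> \<in> S_P"
    and fixed: "\<And>q. q \<le> rat_height a + rat_height b + rat_height (a + b) \<Longrightarrow> \<sigma> q = q"
  shows "padd \<sigma> a b = a + b"
proof -
  have "hat \<sigma> a = a" "hat \<sigma> b = b"
    by (rule hat_eq_self_if_fixes_below, rule fixed, linarith)+
  moreover have "hat (perm_inv \<sigma>) (a + b) = a + b"
    by (rule hat_eq_self_if_fixes_below, subst perm_inv_fixes_iff[OF assms(1)], rule fixed) linarith
  ultimately show ?thesis by (simp add: padd_def)
qed

lemma exists_nonid_perm_fixing_below: "\<exists>\<sigma>\<in>S_P. \<sigma> \<noteq> id \<and> (\<forall>q\<le>N. \<sigma> q = q)"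
proof -
  obtain p1 where p1: "prime p1" "p1 > N" using bigger_prime by blast
  obtain p2 where p2: "prime p2" "p2 > p1" using bigger_prime by blast
  define \<sigma> where "\<sigma> = id (p1 := p2, p2 := p1)"
  have "bij_betw \<sigma> primes_set primes_set"
    by (rule bij_betw_byWitness[where f' = \<sigma>])
      (use p1 p2 in \<open>auto simp: \<sigma>_def primes_set_def\<close>)
  moreover have "\<not> prime n \<Longrightarrow> \<sigma> n = n" for n
    using p1 p2 by (auto simp: \<sigma>_def)
  moreover have "\<sigma> p1 \<noteq> p1" "\<forall>q\<le>N. \<sigma> q = q"
    using p1 p2 by (auto simp: \<sigma>_def)
  ultimately have "\<sigma> \<in> S_P" "\<sigma> \<noteq> id" "\<forall>q\<le>N. \<sigma> q = q"
    unfolding S_P_def by auto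
  then show ?thesis by blast
qed

section \<open>Block type\<close>

definition dsum_single :: "(nat \<Rightarrow> nat) \<Rightarrow> rat \<Rightarrow> (nat \<Rightarrow> nat) \<Rightarrow> rat" where
  "dsum_single \<sigma> x = (\<lambda>\<tau>. if \<tau> = \<sigma> then x else 0)"

lemma dsum_carrier_vanishes: "v \<in> dsum_carrier I \<Longrightarrow> \<sigma> \<notin> I \<Longrightarrow> v \<sigma> = 0"
  unfolding dsum_carrier_def by blast

lemma dsum_single_in_carrier: "\<sigma> \<in> I \<Longrightarrow> dsum_single \<sigma> x \<in> dsum_carrier I"
  unfolding dsum_single_def dsum_carrier_def by (auto intro: finite_subset[of _ "{\<sigma>}"])

lemma dsum_single_inject: "dsum_single \<sigma> x = dsum_single \<sigma> y \<longleftrightarrow> x = y"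
  unfolding dsum_single_def by metis

lemma dsum_add_single:
  "\<sigma> \<in> I \<Longrightarrow> dsum_add I (dsum_single \<sigma> a) (dsum_single \<sigma> b) = dsum_single \<sigma> (padd \<sigma> a b)"
  by (auto simp: dsum_add_def dsum_single_def padd_zero)

lemma dsum_smult_single: "dsum_smult q (dsum_single \<sigma> x) = dsum_single \<sigma> (q * x)"
  by (auto simp: dsum_smult_def dsum_single_def)

lemma u_add_component:
  assumes u: "u \<in> quasi_kernel (dsum_carrier I) (dsum_add I) dsum_smult"
    and "\<sigma> \<in> I" "u \<sigma> \<noteq> 0"
  shows "u_add (dsum_add I) dsum_smult u \<alpha> \<beta> * u \<sigma> = padd \<sigma> (\<alpha> * u \<sigma>) (\<beta> * u \<sigma>)"
proof -
  obtain \<gamma> where \<gamma>: "dsum_add I (dsum_smult \<alpha> u) (dsum_smult \<beta> u) = dsum_smult \<gamma> u"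
    using u unfolding quasi_kernel_def by blast
  have "u_add (dsum_add I) dsum_smult u \<alpha> \<beta> = \<gamma>"
    unfolding u_add_def
  proof (rule the_equality)
    fix \<gamma>' assume "dsum_add I (dsum_smult \<alpha> u) (dsum_smult \<beta> u) = dsum_smult \<gamma>' u"
    from fun_cong[OF trans[OF sym[OF this] \<gamma>], of \<sigma>] show "\<gamma>' = \<gamma>"
      using \<open>u \<sigma> \<noteq> 0\<close> by (simp add: dsum_smult_def)
  qed (rule \<gamma>)
  with fun_cong[OF \<gamma>, of \<sigma>] \<open>\<sigma> \<in> I\<close> show ?thesis
    by (simp add: dsum_add_def dsum_smult_def)
qed

lemma plus_in_block_type_iff:
  assumes "I \<subseteq> S_P"
  shows "(+) \<in> block_type (dsum_carrier I) (dsum_add I) dsum_zero dsum_smult \<longleftrightarrow> id \<in> I"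
proof
  assume "(+) \<in> block_type (dsum_carrier I) (dsum_add I) dsum_zero dsum_smult"
  then obtain u where u: "u \<in> quasi_kernel (dsum_carrier I) (dsum_add I) dsum_smult"
    and "u \<noteq> dsum_zero" and plus: "u_add (dsum_add I) dsum_smult u = (+)"
    unfolding block_type_def by auto
  then obtain \<sigma> where "u \<sigma> \<noteq> 0" by (auto simp: dsum_zero_def)
  moreover have "\<sigma> \<in> I"
    using u \<open>u \<sigma> \<noteq> 0\<close> dsum_carrier_vanishes by (auto simp: quasi_kernel_def)
  moreover have "padd \<sigma> a b = a + b" for a b
  proof -
    have "u \<sigma> * padd \<sigma> a b = u \<sigma> * (a + b)"
      using u_add_component[OF u \<open>\<sigma> \<in> I\<close> \<open>u \<sigma> \<noteq> 0\<close>, of "a / u \<sigma>" "b / u \<sigma>"] \<open>u \<sigma> \<noteq> 0\<close>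
      by (simp add: plus field_simps)
    then show ?thesis using \<open>u \<sigma> \<noteq> 0\<close> by simp
  qed
  ultimately show "id \<in> I"
    using padd_neq_plus assms by blast
next
  assume id: "id \<in> I"
  let ?u = "dsum_single id 1"
  have "dsum_add I (dsum_smult \<alpha> ?u) (dsum_smult \<beta> ?u) = dsum_smult (\<alpha> + \<beta>) ?u" for \<alpha> \<beta>
    using id by (simp add: dsum_smult_single dsum_add_single padd_id)
  then have u: "?u \<in> quasi_kernel (dsum_carrier I) (dsum_add I) dsum_smult"
    unfolding quasi_kernel_def using dsum_single_in_carrier[OF id] by blast
  moreover have "?u \<noteq> dsum_zero"
    by (metis dsum_single_def dsum_zero_def zero_neq_one)
  moreover have "u_add (dsum_add I) dsum_smult ?u = (+)"
    using u_add_component[OF u id] by (auto simp: dsum_single_def padd_id)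
  ultimately show "(+) \<in> block_type (dsum_carrier I) (dsum_add I) dsum_zero dsum_smult"
    unfolding block_type_def by force
qed

section \<open>Formal sums acting as automorphisms\<close>

abbreviation padd_fsum :: "(nat \<Rightarrow> nat) \<Rightarrow> rat list \<Rightarrow> rat \<Rightarrow> rat" where
  "padd_fsum \<sigma> \<equiv> fsum_action (padd \<sigma>) 0 (*)"

lemma padd_fsum_zero: "padd_fsum \<sigma> as 0 = 0"
  by (induction "padd \<sigma>" "0::rat" "(*) :: rat \<Rightarrow> _" as "0::rat" rule: fsum_action.induct)
    (simp_all add: padd_zero)

lemma fsum_action_dsum:
  assumes "v \<in> dsum_carrier I"
  shows "fsum_action (dsum_add I) dsum_zero dsum_smult as v
    = (\<lambda>\<sigma>. if \<sigma> \<in> I then padd_fsum \<sigma> as (v \<sigma>) else 0)"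
  using assms
  by (induction "dsum_add I" dsum_zero dsum_smult as v rule: fsum_action.induct)
    (auto simp: dsum_zero_def dsum_smult_def dsum_add_def dsum_carrier_def)

lemma fsum_action_dsum_single:
  "\<sigma> \<in> I \<Longrightarrow> fsum_action (dsum_add I) dsum_zero dsum_smult as (dsum_single \<sigma> x)
    = dsum_single \<sigma> (padd_fsum \<sigma> as x)"
  unfolding fsum_action_dsum[OF dsum_single_in_carrier] by (auto simp: dsum_single_def padd_fsum_zero)

lemma fsum_action_in_dsum_carrier:
  assumes "v \<in> dsum_carrier I"
  shows "fsum_action (dsum_add I) dsum_zero dsum_smult as v \<in> dsum_carrier I"
proof -
  have "{\<sigma>. padd_fsum \<sigma> as (v \<sigma>) \<noteq> 0} \<subseteq> {\<sigma>. v \<sigma> \<noteq> 0}"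
    by (auto simp: padd_fsum_zero)
  then show ?thesis
    using assms by (auto simp: fsum_action_dsum dsum_carrier_def intro: finite_subset)
qed

lemma dsum_add_in_carrier:
  assumes "x \<in> dsum_carrier I" "y \<in> dsum_carrier I"
  shows "dsum_add I x y \<in> dsum_carrier I"
proof -
  have "{\<sigma>. dsum_add I x y \<sigma> \<noteq> 0} \<subseteq> {\<sigma>. x \<sigma> \<noteq> 0} \<union> {\<sigma>. y \<sigma> \<noteq> 0}"
    by (auto simp: dsum_add_def padd_zero)
  then have "finite {\<sigma>. dsum_add I x y \<sigma> \<noteq> 0}"
    using assms by (auto simp: dsum_carrier_def intro: finite_subset)
  then show ?thesis by (simp add: dsum_carrier_def dsum_add_def)
qed

lemma is_group_aut_component:
  assumes aut: "is_group_aut (dsum_carrier I) (dsum_add I) (fsum_action (dsum_add I) dsum_zero dsum_smult as)"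
    and "\<sigma> \<in> I"
  shows "is_group_aut UNIV (padd \<sigma>) (padd_fsum \<sigma> as)"
proof -
  let ?A = "fsum_action (dsum_add I) dsum_zero dsum_smult as"
  note single = dsum_single_in_carrier[OF \<open>\<sigma> \<in> I\<close>]
  note A_single = fsum_action_dsum_single[OF \<open>\<sigma> \<in> I\<close>]
  have bij: "bij_betw ?A (dsum_carrier I) (dsum_carrier I)"
    and hom: "\<And>x y. x \<in> dsum_carrier I \<Longrightarrow> y \<in> dsum_carrier I \<Longrightarrow> ?A (dsum_add I x y) = dsum_add I (?A x) (?A y)"
    using aut unfolding is_group_aut_def by auto
  have "inj (padd_fsum \<sigma> as)"
  proof (rule injI)
    fix x y assume "padd_fsum \<sigma> as x = padd_fsum \<sigma> as y"
    then have "?A (dsum_single \<sigma> x) = ?A (dsum_single \<sigma> y)" by (simp add: A_single)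
    then show "x = y"
      using bij single unfolding bij_betw_def inj_on_def by (metis dsum_single_inject)
  qed
  moreover have "surj (padd_fsum \<sigma> as)"
  proof -
    have "y \<in> range (padd_fsum \<sigma> as)" for y
    proof -
      obtain v where v: "v \<in> dsum_carrier I" and "?A v = dsum_single \<sigma> y"
        using bij single by (metis bij_betw_def imageE)
      from fun_cong[OF this(2), of \<sigma>] have "padd_fsum \<sigma> as (v \<sigma>) = y"
        using \<open>\<sigma> \<in> I\<close> by (simp add: fsum_action_dsum[OF v] dsum_single_def)
      then show ?thesis by blast
    qed
    then show ?thesis by blast
  qed
  moreover have "padd_fsum \<sigma> as (padd \<sigma> x y) = padd \<sigma> (padd_fsum \<sigma> as x) (padd_fsum \<sigma> as y)" for x y
    using hom[OF single single, of x y] \<open>\<sigma> \<in> I\<close>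
    by (simp add: dsum_add_single A_single dsum_single_inject)
  ultimately show ?thesis
    unfolding is_group_aut_def bij_betw_def by blast
qed

lemma is_group_aut_dsum:
  assumes comp: "\<forall>\<sigma>\<in>I. is_group_aut UNIV (padd \<sigma>) (padd_fsum \<sigma> as)"
  shows "is_group_aut (dsum_carrier I) (dsum_add I) (fsum_action (dsum_add I) dsum_zero dsum_smult as)"
proof -
  let ?A = "fsum_action (dsum_add I) dsum_zero dsum_smult as"
  have bij: "bij (padd_fsum \<sigma> as)"
    and hom: "padd_fsum \<sigma> as (padd \<sigma> x y) = padd \<sigma> (padd_fsum \<sigma> as x) (padd_fsum \<sigma> as y)"
    if "\<sigma> \<in> I" for \<sigma> x y
    using comp that by (auto simp: is_group_aut_def)
  have "inj_on ?A (dsum_carrier I)"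
  proof (rule inj_onI)
    fix v w assume v: "v \<in> dsum_carrier I" and w: "w \<in> dsum_carrier I" and eq: "?A v = ?A w"
    show "v = w"
    proof
      fix \<sigma>
      show "v \<sigma> = w \<sigma>"
      proof (cases "\<sigma> \<in> I")
        case True
        with fun_cong[OF eq, of \<sigma>] have "padd_fsum \<sigma> as (v \<sigma>) = padd_fsum \<sigma> as (w \<sigma>)"
          by (simp add: fsum_action_dsum[OF v] fsum_action_dsum[OF w])
        then show ?thesis using bij[OF True] by (simp add: bij_betw_def inj_eq)
      next
        case False
        then show ?thesis using v w by (simp add: dsum_carrier_vanishes)
      qed
    qed
  qed
  moreover have "w \<in> ?A ` dsum_carrier I" if w: "w \<in> dsum_carrier I" for w
  proof -
    define v where "v = (\<lambda>\<sigma>. if \<sigma> \<in> I then inv (padd_fsum \<sigma> as) (w \<sigma>) else 0)"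
    have inv_zero: "\<sigma> \<in> I \<Longrightarrow> inv (padd_fsum \<sigma> as) 0 = 0" for \<sigma>
      using bij by (metis bij_is_inj inv_f_f padd_fsum_zero)
    have "{\<sigma>. v \<sigma> \<noteq> 0} \<subseteq> {\<sigma>. w \<sigma> \<noteq> 0}"
      unfolding v_def using inv_zero by auto
    moreover have "finite {\<sigma>. w \<sigma> \<noteq> 0}"
      using w by (simp add: dsum_carrier_def)
    ultimately have "finite {\<sigma>. v \<sigma> \<noteq> 0}"
      by (rule finite_subset)
    then have v: "v \<in> dsum_carrier I"
      by (simp add: dsum_carrier_def v_def)
    have "?A v = w"
      unfolding fsum_action_dsum[OF v]
      using w bij by (auto simp: v_def dsum_carrier_vanishes bij_is_surj surj_f_inv_f)
    then show ?thesis using v by blast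
  qed
  moreover have "?A (dsum_add I x y) = dsum_add I (?A x) (?A y)"
    if "x \<in> dsum_carrier I" "y \<in> dsum_carrier I" for x y
    unfolding fsum_action_dsum[OF dsum_add_in_carrier[OF that]] fsum_action_dsum[OF that(1)]
      fsum_action_dsum[OF that(2)]
    using hom by (auto simp: dsum_add_def)
  ultimately show ?thesis
    unfolding is_group_aut_def bij_betw_def
    using fsum_action_in_dsum_carrier by blast
qed

lemma is_group_aut_dsum_iff:
  "is_group_aut (dsum_carrier I) (dsum_add I) (fsum_action (dsum_add I) dsum_zero dsum_smult as)
     \<longleftrightarrow> (\<forall>\<sigma>\<in>I. is_group_aut UNIV (padd \<sigma>) (padd_fsum \<sigma> as))"
  using is_group_aut_component is_group_aut_dsum by blast

lemma padd_fsum_id: "padd_fsum id as x = sum_list as * x"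
  by (induction "padd id" "0::rat" "(*) :: rat \<Rightarrow> _" as x rule: fsum_action.induct)
    (simp_all add: padd_id algebra_simps)

lemma is_group_aut_padd_fsum_id_iff:
  "is_group_aut UNIV (padd id) (padd_fsum id as) \<longleftrightarrow> sum_list as \<noteq> 0"
proof
  assume "is_group_aut UNIV (padd id) (padd_fsum id as)"
  then have "padd_fsum id as 1 \<noteq> padd_fsum id as 0"
    by (simp add: is_group_aut_def bij_betw_def inj_eq)
  then show "sum_list as \<noteq> 0" by (simp add: padd_fsum_id)
next
  assume "sum_list as \<noteq> 0"
  then have "bij ((*) (sum_list as))"
    by (intro bij_betw_byWitness[where f' = "\<lambda>x. x / sum_list as"]) auto
  moreover have "padd_fsum id as = (*) (sum_list as)"
    by (simp add: fun_eq_iff padd_fsum_id)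
  ultimately show "is_group_aut UNIV (padd id) (padd_fsum id as)"
    by (simp add: is_group_aut_def padd_id algebra_simps)
qed

lemma padd_fsum_eq_if_fixes_below:
  "\<exists>N. \<forall>\<sigma>\<in>S_P. (\<forall>q\<le>N. \<sigma> q = q) \<longrightarrow> padd_fsum \<sigma> as x = sum_list as * x"
proof (induction as rule: induct_list012)
  case (3 \<alpha> \<beta> r)
  obtain N where N: "\<forall>\<sigma>\<in>S_P. (\<forall>q\<le>N. \<sigma> q = q) \<longrightarrow> padd_fsum \<sigma> (\<beta> # r) x = sum_list (\<beta> # r) * x"
    using "3.IH"(2) by blast
  define s where "s = sum_list (\<beta> # r) * x"
  define M where "M = max N (rat_height (\<alpha> * x) + rat_height s + rat_height (\<alpha> * x + s))"
  have "padd_fsum \<sigma> (\<alpha> # \<beta> # r) x = sum_list (\<alpha> # \<beta> # r) * x"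
    if "\<sigma> \<in> S_P" "\<forall>q\<le>M. \<sigma> q = q" for \<sigma>
    using that N padd_eq_plus_if_fixes_below[of \<sigma> "\<alpha> * x" s]
    by (simp add: M_def s_def algebra_simps)
  then show ?case by blast
qed auto

lemma is_group_aut_padd_fsum_id_if_nonid:
  assumes "\<forall>\<sigma>\<in>S_P - {id}. is_group_aut UNIV (padd \<sigma>) (padd_fsum \<sigma> as)"
  shows "is_group_aut UNIV (padd id) (padd_fsum id as)"
proof -
  obtain N where N: "\<forall>\<sigma>\<in>S_P. (\<forall>q\<le>N. \<sigma> q = q) \<longrightarrow> padd_fsum \<sigma> as 1 = sum_list as"
    using padd_fsum_eq_if_fixes_below[of as 1] by auto
  obtain \<sigma> where \<sigma>: "\<sigma> \<in> S_P" "\<sigma> \<noteq> id" "\<forall>q\<le>N. \<sigma> q = q"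
    using exists_nonid_perm_fixing_below by blast
  then have "is_group_aut UNIV (padd \<sigma>) (padd_fsum \<sigma> as)"
    using assms by blast
  then have "padd_fsum \<sigma> as 1 \<noteq> padd_fsum \<sigma> as 0"
    by (simp add: is_group_aut_def bij_betw_def inj_eq)
  then have "sum_list as \<noteq> 0"
    using N \<sigma> by (simp add: padd_fsum_zero)
  then show ?thesis
    using is_group_aut_padd_fsum_id_iff by blast
qed

theorem mainTheorem9:
  shows "block_type (dsum_carrier I1) (dsum_add I1) dsum_zero dsum_smult
           \<noteq> block_type (dsum_carrier I2) (dsum_add I2) dsum_zero dsum_smult
         \<and> Fbar_Aut (dsum_carrier I1) (dsum_add I1) dsum_zero dsum_smult
           = Fbar_Aut (dsum_carrier I2) (dsum_add I2) dsum_zero dsum_smult"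
proof
  show "block_type (dsum_carrier I1) (dsum_add I1) dsum_zero dsum_smult
           \<noteq> block_type (dsum_carrier I2) (dsum_add I2) dsum_zero dsum_smult"
    using plus_in_block_type_iff[of I1] plus_in_block_type_iff[of I2] id_in_S_P by auto
  have "(\<forall>\<sigma>\<in>I1. is_group_aut UNIV (padd \<sigma>) (padd_fsum \<sigma> as))
    \<longleftrightarrow> (\<forall>\<sigma>\<in>I2. is_group_aut UNIV (padd \<sigma>) (padd_fsum \<sigma> as))" for as
    using is_group_aut_padd_fsum_id_if_nonid[of as] by blast
  then show "Fbar_Aut (dsum_carrier I1) (dsum_add I1) dsum_zero dsum_smult
           = Fbar_Aut (dsum_carrier I2) (dsum_add I2) dsum_zero dsum_smult"
    unfolding Fbar_Aut_def is_group_aut_dsum_iff by simp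
qed

end
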